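(* Let $\mathbb N$ be a strongly connected symmetric directed graph on $m$ vertices without self-arcs, with arc matrices $C_{ij}$ (each with $n$ columns, orthonormal rows) such that $\bar{\mathbb N}$ is well-configured. Let $\mathbb N(0),\mathbb N(1),\dots$ be a sequence of symmetric spanning subgraphs of $\mathbb N$ such that every arc of $\mathbb N$ belongs to $\mathbb N(t)$ for infinitely many $t$. Let $\mathcal N_i(t)$ be the neighbor set of $i$ in $\mathbb N(t)$, $d_i(t)=|\mathcal N_i(t)|$, and $w_{ij}(t)=1/(1+\max\{d_i(t),d_j(t)\})$ for $j\in\mathcal N_i(t)$. For arbitrary $x_i(0)\in\mathbb R^n$, define $$x_i(t+1)=x_i(t)-\frac12\sum_{j\in\mathcal N_i(t)}w_{ij}(t)\big(C_{ij}'C_{ij}+C_{ji}'C_{ji}\big)\big(x_i(t)-x_j(t)\big).$$ Then there exists $x^*\in\mathbb R^n$ with $x_i(t)\to x^*$ as $t\to\infty$ for all $i$.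
   Context: A directed graph is symmetric if whenever $(i,j)$ is an arc so is $(j,i)$. A spanning subgraph of $\mathbb N$ has the same vertex set and a subset of the arcs. Each arc $(j,i)$ of $\mathbb N$ carries a real matrix $C_{ji}$ with $n$ columns; $'$ denotes transpose. $\bar{\mathbb N}$ is well-configured if for all $x_1,\dots,x_m\in\mathbb R^n$, $C_{ji}x_i=C_{ji}x_j$ for every arc $(j,i)$ of $\mathbb N$ implies $x_1=\cdots=x_m$. *)

theory Defs
  imports "HOL-Analysis.Analysis"
begin

text \<open>A real matrix with n columns and an arbitrary (finite) number of rows is
represented by the list of its rows, each row a vector in real^'n.\<close>

definition mat_apply :: "(real^'n) list \<Rightarrow> real^'n \<Rightarrow> real list" where
  "mat_apply C x = map (\<lambda>r. r \<bullet> x) C"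

text \<open>C' C x, i.e. the transpose of C times C times x.\<close>
definition gram_apply :: "(real^'n) list \<Rightarrow> real^'n \<Rightarrow> real^'n" where
  "gram_apply C x = (\<Sum>k<length C. (C ! k \<bullet> x) *\<^sub>R C ! k)"

definition orthonormal_rows :: "(real^'n) list \<Rightarrow> bool" where
  "orthonormal_rows C \<longleftrightarrow>
     (\<forall>k<length C. \<forall>l<length C. C ! k \<bullet> C ! l = (if k = l then 1 else 0))"

definition well_configured :: "('v \<times> 'v) set \<Rightarrow> ('v \<Rightarrow> 'v \<Rightarrow> (real^'n) list) \<Rightarrow> bool" where
  "well_configured E C \<longleftrightarrow>
     (\<forall>x :: 'v \<Rightarrow> real^'n.
        (\<forall>j i. (j, i) \<in> E \<longrightarrow> mat_apply (C j i) (x i) = mat_apply (C j i) (x j))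
        \<longrightarrow> (\<forall>i j. x i = x j))"

definition strongly_connected :: "('v \<times> 'v) set \<Rightarrow> bool" where
  "strongly_connected E \<longleftrightarrow> (\<forall>i j. (i, j) \<in> E\<^sup>*)"

definition nbrs :: "('v \<times> 'v) set \<Rightarrow> 'v \<Rightarrow> 'v set" where
  "nbrs F i = {j. (j, i) \<in> F}"

definition weight :: "('v \<times> 'v) set \<Rightarrow> 'v \<Rightarrow> 'v \<Rightarrow> real" where
  "weight F i j = 1 / (1 + real (max (card (nbrs F i)) (card (nbrs F j))))"

end

theory Submission
  imports Defs
begin

text \<open>Stack the agents' states into one vector \<open>u \<in> (\<real>\<^sup>n)\<^sup>m\<close>. Each update is then a linear
map \<open>u \<mapsto> u - L u / 2\<close> determined by the current graph, and only finitely many graphs occur.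
With \<open>P\<^sub>i\<^sub>j = C\<^sub>i\<^sub>j'C\<^sub>i\<^sub>j + C\<^sub>j\<^sub>i'C\<^sub>j\<^sub>i\<close> one has \<open>|P\<^sub>i\<^sub>j z|\<^sup>2 \<le> 2 z\<bullet>P\<^sub>i\<^sub>j z\<close>, since both summands are orthogonal
projections, and the weights at a vertex sum to at most \<open>m/(m+1)\<close>. By Cauchy--Schwarz and a
symmetrisation of \<open>u\<bullet>L u\<close> this gives \<open>|u - L u/2|\<^sup>2 + |L u/2|\<^sup>2/m \<le> |u|\<^sup>2\<close>, so every update
is a paracontraction: it strictly decreases the norm unless it fixes \<open>u\<close>. An orbit of finitely
many linear paracontractions converges to a limit that is eventually fixed by every map applied.
As every arc recurs, the limit satisfies \<open>C\<^sub>j\<^sub>i y\<^sub>i = C\<^sub>j\<^sub>i y\<^sub>j\<close> on all arcs, and well-configuredness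
forces all \<open>y\<^sub>i\<close> to be equal.\<close>

text \<open>Paracontraction towards the origin; for linear maps this is the usual notion, since
\<open>g u - z = g (u - z)\<close> for every fixed point \<open>z\<close>.\<close>

definition paracontracting :: "('a::real_normed_vector \<Rightarrow> 'a) \<Rightarrow> bool" where
  "paracontracting g \<longleftrightarrow> (\<forall>u. g u \<noteq> u \<longrightarrow> norm (g u) < norm u)"

lemma paracontracting_norm_le: "paracontracting g \<Longrightarrow> norm (g u) \<le> norm u"
  unfolding paracontracting_def by (cases "g u = u") (auto intro: less_imp_le)

lemma finite_paracontracting_gap:
  assumes "finite F" and "\<And>g. g \<in> F \<Longrightarrow> paracontracting g"
  obtains \<epsilon> :: real where "0 < \<epsilon>" and "\<And>g. g \<in> F \<Longrightarrow> g y \<noteq> y \<Longrightarrow> norm (g y) + \<epsilon> \<le> norm y"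
proof
  define D where "D = (\<lambda>g. norm y - norm (g y)) ` {g \<in> F. g y \<noteq> y}"
  have "finite D" unfolding D_def using assms(1) by simp
  moreover have "\<forall>d\<in>D. 0 < d"
    unfolding D_def using assms(2) by (auto simp: paracontracting_def)
  ultimately show "0 < Min (insert 1 D)" by simp
  show "norm (g y) + Min (insert 1 D) \<le> norm y" if "g \<in> F" "g y \<noteq> y" for g
  proof -
    have "Min (insert 1 D) \<le> norm y - norm (g y)"
      using that \<open>finite D\<close> unfolding D_def by (intro Min_le) auto
    then show ?thesis by simp
  qed
qed

lemma LIMSEQ_of_subseq_dist_nonincreasing:
  fixes x :: "nat \<Rightarrow> 'a::metric_space"
  assumes "strict_mono \<sigma>" and "(x \<circ> \<sigma>) \<longlonglongrightarrow> y"
    and "\<And>t. t0 \<le> t \<Longrightarrow> dist (x (Suc t)) y \<le> dist (x t) y"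
  shows "x \<longlonglongrightarrow> y"
proof -
  define d where "d t = dist (x (t + t0)) y" for t
  have "decseq d"
    unfolding decseq_Suc_iff d_def using assms(3) by simp
  then obtain L where "d \<longlonglongrightarrow> L"
    by (rule decseq_convergent[of _ 0]) (simp add: d_def)
  then have "(\<lambda>t. dist (x t) y) \<longlonglongrightarrow> L"
    unfolding d_def by (rule LIMSEQ_offset)
  then have "((\<lambda>t. dist (x t) y) \<circ> \<sigma>) \<longlonglongrightarrow> L"
    using assms(1) by (rule LIMSEQ_subseq_LIMSEQ)
  moreover have "((\<lambda>t. dist (x t) y) \<circ> \<sigma>) \<longlonglongrightarrow> 0"
    using tendsto_dist_iff[THEN iffD1, OF assms(2)] by (simp add: o_def)
  ultimately have "L = 0" by (rule LIMSEQ_unique)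
  with \<open>(\<lambda>t. dist (x t) y) \<longlonglongrightarrow> L\<close> show ?thesis
    by (simp add: tendsto_dist_iff[of x y])
qed

lemma subseq_limit_norm_le_if_norm_decseq:
  fixes x :: "nat \<Rightarrow> 'a::{real_normed_vector, heine_borel}"
  assumes "decseq (\<lambda>t. norm (x t))"
  obtains y \<sigma> where "strict_mono \<sigma>" and "(x \<circ> \<sigma>) \<longlonglongrightarrow> y" and "\<And>t. norm y \<le> norm (x t)"
proof -
  obtain r where r: "(\<lambda>t. norm (x t)) \<longlonglongrightarrow> r" and r_le: "\<And>t. r \<le> norm (x t)"
    using assms by (rule decseq_convergent[of _ 0]) auto
  have "bounded (range x)"
    using decseqD[OF assms, of 0] by (auto simp: bounded_iff intro!: exI[of _ "norm (x 0)"])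
  then obtain y \<sigma> where \<sigma>: "strict_mono \<sigma>" and y: "(x \<circ> \<sigma>) \<longlonglongrightarrow> y"
    using bounded_imp_convergent_subsequence by blast
  have "(\<lambda>k. norm (x (\<sigma> k))) \<longlonglongrightarrow> norm y"
    using tendsto_norm[OF y] by (simp add: o_def)
  moreover have "(\<lambda>k. norm (x (\<sigma> k))) \<longlonglongrightarrow> r"
    using LIMSEQ_subseq_LIMSEQ[OF r \<sigma>] by (simp add: o_def)
  ultimately have "norm y = r"
    by (rule LIMSEQ_unique)
  with \<sigma> y r_le show thesis
    by (intro that) auto
qed

theorem linear_paracontractions_orbit_converges:
  fixes x :: "nat \<Rightarrow> 'a::{real_normed_vector, heine_borel}"
  assumes "finite F" and F: "\<And>g. g \<in> F \<Longrightarrow> linear g \<and> paracontracting g"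
    and f: "\<And>t. f t \<in> F" and x: "\<And>t. x (Suc t) = f t (x t)"
  shows "\<exists>y. x \<longlonglongrightarrow> y \<and> (\<exists>t0. \<forall>t\<ge>t0. f t y = y)"
proof -
  have lin: "linear (f t)" and para: "paracontracting (f t)" for t
    using F f by auto
  have "decseq (\<lambda>t. norm (x t))"
    unfolding decseq_Suc_iff x using para by (simp add: paracontracting_norm_le)
  then obtain y \<sigma> where \<sigma>: "strict_mono \<sigma>" and y: "(x \<circ> \<sigma>) \<longlonglongrightarrow> y"
    and y_le: "\<And>t. norm y \<le> norm (x t)"
    by (rule subseq_limit_norm_le_if_norm_decseq) blast
  obtain \<epsilon> where "0 < \<epsilon>" and gap: "\<And>g. g \<in> F \<Longrightarrow> g y \<noteq> y \<Longrightarrow> norm (g y) + \<epsilon> \<le> norm y"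
    by (rule finite_paracontracting_gap[OF \<open>finite F\<close>]) (use F in auto)
  have step_le: "norm (f s (x s) - f s y) \<le> dist (x s) y" for s
    using paracontracting_norm_le[OF para, of s "x s - y"] by (simp add: dist_norm linear_diff[OF lin])
  have fixed: "f s y = y" if "dist (x s) y < \<epsilon>" for s
  proof (rule ccontr)
    assume "f s y \<noteq> y"
    have "norm (x (Suc s)) \<le> norm (f s y) + norm (f s (x s) - f s y)"
      unfolding x by (rule norm_triangle_sub)
    also have "\<dots> < norm y"
      using step_le[of s] that gap[OF f \<open>f s y \<noteq> y\<close>] by simp
    finally show False
      using y_le[of "Suc s"] by simp
  qed
  have nonexp: "dist (x (Suc s)) y \<le> dist (x s) y" if "f s y = y" for s
    using step_le[of s] that by (simp add: x dist_norm)
  obtain t0 where t0: "dist (x t0) y < \<epsilon>"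
  proof -
    have "\<forall>\<^sub>F k in sequentially. dist ((x \<circ> \<sigma>) k) y < \<epsilon>"
      using y \<open>0 < \<epsilon>\<close> by (rule tendstoD)
    then show thesis
      using that by (auto simp: eventually_sequentially)
  qed
  have close: "dist (x t) y < \<epsilon>" if "t0 \<le> t" for t
    using that
  proof (induction t rule: dec_induct)
    case (step t)
    then show ?case
      using fixed nonexp by (meson le_less_trans)
  qed (fact t0)
  have "x \<longlonglongrightarrow> y"
    using \<sigma> y by (rule LIMSEQ_of_subseq_dist_nonincreasing) (rule nonexp[OF fixed[OF close]])
  moreover have "\<forall>t\<ge>t0. f t y = y"
    by (simp add: fixed close)
  ultimately show ?thesis
    by blast
qed

lemma sum_nbrs_swap:
  fixes G :: "('v::finite \<times> 'v) set" and f :: "'v \<Rightarrow> 'v \<Rightarrow> 'a::comm_monoid_add"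
  assumes "sym G"
  shows "(\<Sum>i\<in>UNIV. \<Sum>j\<in>nbrs G i. f i j) = (\<Sum>i\<in>UNIV. \<Sum>j\<in>nbrs G i. f j i)"
proof -
  have "(\<Sum>i\<in>UNIV. \<Sum>j\<in>nbrs G i. f i j) = (\<Sum>i\<in>UNIV. \<Sum>j\<in>{j\<in>UNIV. (j, i) \<in> G}. f i j)"
    by (simp add: nbrs_def)
  also have "\<dots> = (\<Sum>j\<in>UNIV. \<Sum>i\<in>{i\<in>UNIV. (j, i) \<in> G}. f i j)"
    by (rule sum.swap_restrict) auto
  also have "\<dots> = (\<Sum>j\<in>UNIV. \<Sum>i\<in>nbrs G j. f i j)"
    using assms by (intro sum.cong refl) (auto simp: nbrs_def dest: symD)
  finally show ?thesis .
qed

lemma weight_pos: "0 < weight G i j"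
  by (simp add: weight_def)

lemma weight_commute: "weight G i j = weight G j i"
  by (simp add: weight_def max.commute)

lemma sum_weight_le:
  fixes G :: "('v::finite \<times> 'v) set"
  shows "(\<Sum>j\<in>nbrs G i. weight G i j) \<le> real CARD('v) / (1 + real CARD('v))"
proof -
  define d where "d = card (nbrs G i)"
  have "(\<Sum>j\<in>nbrs G i. weight G i j) \<le> (\<Sum>j\<in>nbrs G i. 1 / (1 + real d))"
    unfolding weight_def d_def by (intro sum_mono) (simp add: frac_le)
  also have "\<dots> = real d / (1 + real d)"
    by (simp add: d_def)
  also have "\<dots> \<le> real CARD('v) / (1 + real CARD('v))"
  proof -
    have "real d \<le> real CARD('v)"
      unfolding d_def by (simp add: card_mono)
    then show ?thesis
      by (simp add: divide_simps algebra_simps)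
  qed
  finally show ?thesis .
qed

lemma weighted_square_sum_le:
  fixes w a :: "'a \<Rightarrow> real"
  assumes "\<And>j. j \<in> A \<Longrightarrow> 0 \<le> w j"
  shows "(\<Sum>j\<in>A. w j * a j)\<^sup>2 \<le> (\<Sum>j\<in>A. w j) * (\<Sum>j\<in>A. w j * (a j)\<^sup>2)"
proof -
  have "(\<Sum>j\<in>A. w j * a j) = (\<Sum>j\<in>A. sqrt (w j) * (sqrt (w j) * a j))"
    and "(\<Sum>j\<in>A. w j) = (\<Sum>j\<in>A. (sqrt (w j))\<^sup>2)"
    and "(\<Sum>j\<in>A. w j * (a j)\<^sup>2) = (\<Sum>j\<in>A. (sqrt (w j) * a j)\<^sup>2)"
    using assms by (auto intro!: sum.cong simp: power_mult_distrib simp flip: mult.assoc)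
  then show ?thesis
    using Cauchy_Schwarz_ineq_sum[of "\<lambda>j. sqrt (w j)" "\<lambda>j. sqrt (w j) * a j" A] by simp
qed

lemma linear_gram_apply: "linear (gram_apply C)"
  by (rule linearI)
    (simp_all add: gram_apply_def inner_add_right scaleR_add_left sum.distrib scaleR_sum_right)

lemma inner_gram_apply: "z \<bullet> gram_apply C z = (\<Sum>k<length C. (C ! k \<bullet> z)\<^sup>2)"
  unfolding gram_apply_def by (simp add: inner_sum_right power2_eq_square inner_commute)

lemma gram_apply_inner_self:
  assumes "orthonormal_rows C"
  shows "gram_apply C z \<bullet> gram_apply C z = z \<bullet> gram_apply C z"
proof -
  have "gram_apply C z \<bullet> gram_apply C z =
      (\<Sum>k<length C. \<Sum>l<length C. (C ! k \<bullet> z) * (C ! l \<bullet> z) * (C ! k \<bullet> C ! l))"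
    unfolding gram_apply_def
    by (simp add: inner_sum_left inner_sum_right mult.assoc sum_distrib_left, simp add: inner_commute)
  also have "\<dots> = (\<Sum>k<length C. \<Sum>l<length C. if k = l then (C ! k \<bullet> z) * (C ! l \<bullet> z) else 0)"
    using assms unfolding orthonormal_rows_def by (intro sum.cong refl) auto
  finally show ?thesis
    by (simp add: inner_gram_apply power2_eq_square)
qed

lemma mat_apply_eq_if_inner_gram_apply_eq_0:
  assumes "(a - b) \<bullet> gram_apply C (a - b) = 0"
  shows "mat_apply C a = mat_apply C b"
proof -
  have "\<forall>k<length C. C ! k \<bullet> (a - b) = 0"
    using assms by (simp add: inner_gram_apply sum_nonneg_eq_0_iff)
  then show ?thesis
    unfolding mat_apply_def by (auto simp: in_set_conv_nth inner_diff_right)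
qed

definition pair_gram :: "('v \<Rightarrow> 'v \<Rightarrow> (real^'n) list) \<Rightarrow> 'v \<Rightarrow> 'v \<Rightarrow> real^'n \<Rightarrow> real^'n" where
  "pair_gram C i j z = gram_apply (C i j) z + gram_apply (C j i) z"

lemma pair_gram_commute: "pair_gram C i j = pair_gram C j i"
  by (auto simp: pair_gram_def)

lemma linear_pair_gram: "linear (pair_gram C i j)"
  unfolding pair_gram_def by (intro linear_compose_add linear_gram_apply)

lemma inner_pair_gram_nonneg: "0 \<le> z \<bullet> pair_gram C i j z"
  by (simp add: pair_gram_def inner_add_right inner_gram_apply sum_nonneg)

lemma pair_gram_inner_self_le:
  assumes "orthonormal_rows (C i j)" and "orthonormal_rows (C j i)"
  shows "pair_gram C i j z \<bullet> pair_gram C i j z \<le> 2 * (z \<bullet> pair_gram C i j z)"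
proof -
  define a b where "a = gram_apply (C i j) z" and "b = gram_apply (C j i) z"
  have "(a + b) \<bullet> (a + b) \<le> 2 * (a \<bullet> a + b \<bullet> b)"
    using inner_ge_zero[of "a - b"]
    by (simp add: inner_add_left inner_add_right inner_diff_left inner_diff_right inner_commute)
  then show ?thesis
    using assms by (simp add: pair_gram_def a_def b_def gram_apply_inner_self inner_add_right)
qed

definition laplacian ::
    "('v \<Rightarrow> 'v \<Rightarrow> (real^'n) list) \<Rightarrow> ('v \<times> 'v) set \<Rightarrow> (real^'n)^'v::finite \<Rightarrow> (real^'n)^'v" where
  "laplacian C G u = (\<chi> i. \<Sum>j\<in>nbrs G i. weight G i j *\<^sub>R pair_gram C i j (u $ i - u $ j))"

definition laplacian_energy ::
    "('v \<Rightarrow> 'v \<Rightarrow> (real^'n) list) \<Rightarrow> ('v \<times> 'v) set \<Rightarrow> (real^'n)^'v::finite \<Rightarrow> real" where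
  "laplacian_energy C G u =
     (\<Sum>i\<in>UNIV. \<Sum>j\<in>nbrs G i. weight G i j * ((u $ i - u $ j) \<bullet> pair_gram C i j (u $ i - u $ j)))"

definition consensus_step ::
    "('v \<Rightarrow> 'v \<Rightarrow> (real^'n) list) \<Rightarrow> ('v \<times> 'v) set \<Rightarrow> (real^'n)^'v::finite \<Rightarrow> (real^'n)^'v" where
  "consensus_step C G u = u - (1/2) *\<^sub>R laplacian C G u"

lemma linear_laplacian: "linear (laplacian C G)"
proof -
  have P: "linear (pair_gram C i j)" for i j
    by (rule linear_pair_gram)
  show ?thesis
    by (rule linearI; subst vec_eq_iff; rule allI)
      (simp_all add: laplacian_def add_diff_add linear_add[OF P] linear_scale[OF P]
        scaleR_add_right sum.distrib scaleR_sum_right mult.commute flip: scaleR_diff_right)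
qed

lemma linear_consensus_step: "linear (consensus_step C G)"
  using linear_laplacian[of C G]
  by (intro linearI) (simp_all add: consensus_step_def linear_add linear_scale algebra_simps)

lemma inner_laplacian:
  assumes "sym G"
  shows "u \<bullet> laplacian C G u = laplacian_energy C G u / 2"
proof -
  define S where "S = u \<bullet> laplacian C G u"
  have S: "S = (\<Sum>i\<in>UNIV. \<Sum>j\<in>nbrs G i. weight G i j * (u $ i \<bullet> pair_gram C i j (u $ i - u $ j)))"
    unfolding S_def laplacian_def by (simp add: inner_vec_def[of u] inner_sum_right)
  also have "\<dots> = (\<Sum>i\<in>UNIV. \<Sum>j\<in>nbrs G i. weight G j i * (u $ j \<bullet> pair_gram C j i (u $ j - u $ i)))"
    by (rule sum_nbrs_swap[OF assms])
  also have "\<dots> = (\<Sum>i\<in>UNIV. \<Sum>j\<in>nbrs G i. - (weight G i j * (u $ j \<bullet> pair_gram C i j (u $ i - u $ j))))"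
    by (simp add: weight_commute[of G j i for i j] pair_gram_commute[of C j i for i j]
        linear_diff[OF linear_pair_gram] inner_diff_right algebra_simps)
  finally have S': "S = (\<Sum>i\<in>UNIV. \<Sum>j\<in>nbrs G i. - (weight G i j * (u $ j \<bullet> pair_gram C i j (u $ i - u $ j))))" .
  have "S + S = (\<Sum>i\<in>UNIV. \<Sum>j\<in>nbrs G i. weight G i j * (u $ i \<bullet> pair_gram C i j (u $ i - u $ j)))
      + (\<Sum>i\<in>UNIV. \<Sum>j\<in>nbrs G i. - (weight G i j * (u $ j \<bullet> pair_gram C i j (u $ i - u $ j))))"
    using S S' by (rule arg_cong2)
  also have "\<dots> = laplacian_energy C G u"
    unfolding laplacian_energy_def
    by (simp add: inner_diff_left right_diff_distrib flip: sum.distrib)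
  finally show ?thesis
    unfolding S_def by simp
qed

lemma norm_laplacian_component_le:
  fixes G :: "('v::finite \<times> 'v) set"
  assumes orth: "\<And>i j. (i, j) \<in> G \<Longrightarrow> orthonormal_rows (C i j)" and "sym G"
  shows "(norm (laplacian C G u $ i))\<^sup>2 \<le> 2 * (real CARD('v) / (1 + real CARD('v))) *
           (\<Sum>j\<in>nbrs G i. weight G i j * ((u $ i - u $ j) \<bullet> pair_gram C i j (u $ i - u $ j)))"
proof -
  define w where "w j = weight G i j" for j
  define z where "z j = u $ i - u $ j" for j
  have w: "0 \<le> w j" for j
    unfolding w_def by (rule less_imp_le[OF weight_pos])
  have "norm (laplacian C G u $ i) \<le> (\<Sum>j\<in>nbrs G i. w j * norm (pair_gram C i j (z j)))"
    unfolding laplacian_def w_def z_def vec_lambda_beta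
    by (rule order_trans[OF norm_sum]) (simp add: abs_of_pos[OF weight_pos])
  then have "(norm (laplacian C G u $ i))\<^sup>2 \<le> (\<Sum>j\<in>nbrs G i. w j * norm (pair_gram C i j (z j)))\<^sup>2"
    by (rule power_mono) simp
  also have "\<dots> \<le> (\<Sum>j\<in>nbrs G i. w j) * (\<Sum>j\<in>nbrs G i. w j * (norm (pair_gram C i j (z j)))\<^sup>2)"
    using w by (rule weighted_square_sum_le)
  also have "\<dots> \<le> (real CARD('v) / (1 + real CARD('v))) * (\<Sum>j\<in>nbrs G i. w j * (2 * (z j \<bullet> pair_gram C i j (z j))))"
  proof (rule mult_mono)
    show "(\<Sum>j\<in>nbrs G i. w j) \<le> real CARD('v) / (1 + real CARD('v))"
      unfolding w_def by (rule sum_weight_le)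
    have "(norm (pair_gram C i j (z j)))\<^sup>2 \<le> 2 * (z j \<bullet> pair_gram C i j (z j))" if "j \<in> nbrs G i" for j
    proof -
      have "(j, i) \<in> G" and "(i, j) \<in> G"
        using that \<open>sym G\<close> by (auto simp: nbrs_def dest: symD)
      then show ?thesis
        by (simp add: power2_norm_eq_inner pair_gram_inner_self_le orth)
    qed
    then show "(\<Sum>j\<in>nbrs G i. w j * (norm (pair_gram C i j (z j)))\<^sup>2) \<le>
        (\<Sum>j\<in>nbrs G i. w j * (2 * (z j \<bullet> pair_gram C i j (z j))))"
      by (intro sum_mono mult_left_mono w)
  qed (use w in \<open>auto intro: sum_nonneg\<close>)
  finally show ?thesis
    by (simp add: w_def z_def sum_distrib_left mult_ac)
qed

lemma norm_laplacian_le: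
  fixes G :: "('v::finite \<times> 'v) set"
  assumes "\<And>i j. (i, j) \<in> G \<Longrightarrow> orthonormal_rows (C i j)" and "sym G"
  shows "(norm (laplacian C G u))\<^sup>2 \<le> 2 * (real CARD('v) / (1 + real CARD('v))) * laplacian_energy C G u"
proof -
  have "(norm (laplacian C G u))\<^sup>2 = (\<Sum>i\<in>UNIV. (norm (laplacian C G u $ i))\<^sup>2)"
    by (simp add: power2_norm_eq_inner inner_vec_def[of "laplacian C G u"])
  also have "\<dots> \<le> (\<Sum>i\<in>UNIV. 2 * (real CARD('v) / (1 + real CARD('v))) *
      (\<Sum>j\<in>nbrs G i. weight G i j * ((u $ i - u $ j) \<bullet> pair_gram C i j (u $ i - u $ j))))"
    by (intro sum_mono norm_laplacian_component_le assms)
  also have "\<dots> = 2 * (real CARD('v) / (1 + real CARD('v))) * laplacian_energy C G u"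
    unfolding laplacian_energy_def by (simp add: sum_distrib_left)
  finally show ?thesis .
qed

lemma norm_consensus_step_le:
  fixes G :: "('v::finite \<times> 'v) set"
  assumes "\<And>i j. (i, j) \<in> G \<Longrightarrow> orthonormal_rows (C i j)" and "sym G"
  shows "(norm (consensus_step C G u))\<^sup>2 + (norm (consensus_step C G u - u))\<^sup>2 / real CARD('v)
           \<le> (norm u)\<^sup>2"
proof -
  define L Q M where "L = laplacian C G u" and "Q = laplacian_energy C G u" and "M = real CARD('v)"
  define D where "D = (norm (consensus_step C G u - u))\<^sup>2"
  have M: "0 < M"
    unfolding M_def by simp
  have D: "D = (norm L)\<^sup>2 / 4"
    by (simp add: D_def L_def consensus_step_def power2_eq_square)
  have "(norm (consensus_step C G u))\<^sup>2 = (norm u)\<^sup>2 - u \<bullet> L + D"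
    by (simp add: D L_def consensus_step_def power2_norm_eq_inner inner_diff_left inner_diff_right
        inner_commute)
  also have "\<dots> = (norm u)\<^sup>2 - Q / 2 + D"
    by (simp add: L_def Q_def inner_laplacian[OF assms(2)])
  finally have "(norm (consensus_step C G u))\<^sup>2 = (norm u)\<^sup>2 - Q / 2 + D" .
  have "(norm L)\<^sup>2 \<le> 2 * (M / (1 + M)) * Q"
    unfolding L_def Q_def M_def by (rule norm_laplacian_le[where C = C and G = G, OF assms])
  then have "D * (1 + M) \<le> M * Q / 2"
    using M by (simp add: D field_simps)
  then have "D + D / M \<le> Q / 2"
    using M by (simp add: field_simps)
  with \<open>(norm (consensus_step C G u))\<^sup>2 = (norm u)\<^sup>2 - Q / 2 + D\<close> show ?thesis
    by (simp add: D_def M_def)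
qed

lemma paracontracting_consensus_step:
  fixes G :: "('v::finite \<times> 'v) set"
  assumes "\<And>i j. (i, j) \<in> G \<Longrightarrow> orthonormal_rows (C i j)" and "sym G"
  shows "paracontracting (consensus_step C G)"
  unfolding paracontracting_def
proof (intro allI impI)
  fix u assume "consensus_step C G u \<noteq> u"
  then have "0 < (norm (consensus_step C G u - u))\<^sup>2 / real CARD('v)"
    by simp
  then have "(norm (consensus_step C G u))\<^sup>2 < (norm u)\<^sup>2"
    using norm_consensus_step_le[where C = C and G = G and u = u, OF assms] by linarith
  then show "norm (consensus_step C G u) < norm u"
    by (simp add: power_less_imp_less_base)
qed

lemma inner_pair_gram_eq_0_if_laplacian_energy_eq_0:
  assumes "laplacian_energy C G u = 0" and "(j, i) \<in> G"
  shows "(u $ i - u $ j) \<bullet> pair_gram C i j (u $ i - u $ j) = 0"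
proof -
  have terms_nonneg: "0 \<le> weight G i j * ((u $ i - u $ j) \<bullet> pair_gram C i j (u $ i - u $ j))" for i j
    by (intro mult_nonneg_nonneg less_imp_le[OF weight_pos] inner_pair_gram_nonneg)
  have "(\<Sum>j\<in>nbrs G i. weight G i j * ((u $ i - u $ j) \<bullet> pair_gram C i j (u $ i - u $ j))) = 0"
    using assms(1) unfolding laplacian_energy_def
    by (subst (asm) sum_nonneg_eq_0_iff) (auto intro: sum_nonneg terms_nonneg)
  then have "weight G i j * ((u $ i - u $ j) \<bullet> pair_gram C i j (u $ i - u $ j)) = 0"
    using assms(2) by (subst (asm) sum_nonneg_eq_0_iff) (auto simp: nbrs_def intro: terms_nonneg)
  then show ?thesis
    using weight_pos[of G i j] by simp
qed

lemma consensus_step_fixed_imp_agree: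
  assumes "sym G" and "consensus_step C G u = u" and "(j, i) \<in> G"
  shows "mat_apply (C j i) (u $ i) = mat_apply (C j i) (u $ j)"
proof -
  have "laplacian C G u = 0"
    using assms(2) by (simp add: consensus_step_def)
  then have "laplacian_energy C G u = 0"
    using inner_laplacian[OF assms(1), where u = u and C = C] by simp
  then have "(u $ i - u $ j) \<bullet> pair_gram C i j (u $ i - u $ j) = 0"
    using assms(3) by (rule inner_pair_gram_eq_0_if_laplacian_energy_eq_0)
  then have "(u $ i - u $ j) \<bullet> gram_apply (C j i) (u $ i - u $ j) = 0"
    by (simp add: pair_gram_def inner_add_right inner_gram_apply sum_nonneg add_nonneg_eq_0_iff)
  then show ?thesis
    by (rule mat_apply_eq_if_inner_gram_apply_eq_0)
qed

theorem theorem6: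
  fixes E :: "('v::finite \<times> 'v) set"
    and C :: "'v \<Rightarrow> 'v \<Rightarrow> (real^'n) list"
    and N :: "nat \<Rightarrow> ('v \<times> 'v) set"
    and x :: "nat \<Rightarrow> 'v \<Rightarrow> real^'n"
  assumes symE: "sym E"
    and noloop: "\<forall>i. (i, i) \<notin> E"
    and sc: "strongly_connected E"
    and orth: "\<forall>i j. (i, j) \<in> E \<longrightarrow> orthonormal_rows (C i j)"
    and wc: "well_configured E C"
    and sub: "\<forall>t. N t \<subseteq> E"
    and symN: "\<forall>t. sym (N t)"
    and inf: "\<forall>a\<in>E. infinite {t. a \<in> N t}"
    and upd: "\<forall>t i. x (Suc t) i = x t i - (1/2) *\<^sub>R
                 (\<Sum>j\<in>nbrs (N t) i. weight (N t) i j *\<^sub>R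
                    (gram_apply (C i j) (x t i - x t j) + gram_apply (C j i) (x t i - x t j)))"
  shows "\<exists>xs :: real^'n. \<forall>i. (\<lambda>t. x t i) \<longlonglongrightarrow> xs"
proof -
  define V where "V t = (\<chi> i. x t i)" for t
  let ?F = "consensus_step C ` {G. G \<subseteq> E \<and> sym G}"
  have "finite ?F"
    by (rule finite_imageI) simp
  moreover have "linear g \<and> paracontracting g" if "g \<in> ?F" for g
    using that orth by (auto intro!: linear_consensus_step paracontracting_consensus_step)
  moreover have "consensus_step C (N t) \<in> ?F" for t
    using sub symN by blast
  moreover have "V (Suc t) = consensus_step C (N t) (V t)" for t
    unfolding V_def consensus_step_def laplacian_def pair_gram_def
    by (subst vec_eq_iff) (simp add: upd)
  ultimately have "\<exists>y. V \<longlonglongrightarrow> y \<and> (\<exists>t0. \<forall>t\<ge>t0. consensus_step C (N t) y = y)"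
    by (rule linear_paracontractions_orbit_converges)
  then obtain y t0 where y: "V \<longlonglongrightarrow> y" and fixed: "\<And>t. t0 \<le> t \<Longrightarrow> consensus_step C (N t) y = y"
    by blast
  have "mat_apply (C j i) (y $ i) = mat_apply (C j i) (y $ j)" if "(j, i) \<in> E" for i j
  proof -
    have "infinite {t. (j, i) \<in> N t}"
      using inf that by blast
    then obtain t where "t0 \<le> t" and "(j, i) \<in> N t"
      unfolding infinite_nat_iff_unbounded_le by blast
    then show ?thesis
      using symN by (intro consensus_step_fixed_imp_agree[OF _ fixed]) simp_all
  qed
  then have "y $ i = y $ j" for i j
    using wc unfolding well_configured_def by (elim allE[where x = "vec_nth y"]) blast
  moreover have "(\<lambda>t. x t i) \<longlonglongrightarrow> y $ i" for i
    using tendsto_vec_nth[OF y, of i] by (simp add: V_def)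
  ultimately have "(\<lambda>t. x t i) \<longlonglongrightarrow> y $ j" for i j
    by metis
  then show ?thesis
    by blast
qed

end
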